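(* (1) $\mathrm{Pr}(\mathrm{Fig}(T^\phi)\setminus\{T\})=m_T\setminus(\mathcal S_1\cup\{T^\phi\})$. (2) $\mathrm{Pr}(\mathrm{Fig}(T^{\phi^2})\setminus\{T\})=m_T\setminus(\mathcal S_1\cup\{T^{\phi^2}\})$.
   Context: Let $q$ be a prime power, $\mathbb{F}_{q^3}^*=\mathbb{F}_{q^3}\setminus\{0\}$. Points of $\mathrm{PG}(2,q^3)$ have homogeneous coordinates $(x,y,z)$ and lines $[a,b,c]$. Let $\phi$ be the collineation $(x,y,z)\mapsto(z^q,x^q,y^q)$ (on lines $[d,e,f]\mapsto[f^q,d^q,e^q]$). A point has Type II (resp. III) if its $\phi$-orbit is three collinear (resp. non-collinear) points; a line has Type III if its $\phi$-orbit is three non-concurrent lines. For a Type III point $X$, the Fig-block is $\mathrm{Fig}(X)=\mathcal E_X\cup\mathcal F_X$, where $\mathcal E_X$ is the set of Type II points on the line $X^\phi X^{\phi^2}$ and $\mathcal F_X=\{\ell^\phi\cap\ell^{\phi^2}:\ell\text{ a Type III line through }X\}$. Let $T=(0,0,1)$, $T^\phi=(1,0,0)$, $T^{\phi^2}=(0,1,0)$ (all Type III), and $m_T=T^\phi T^{\phi^2}$ the line $[0,0,1]$. For a point $P\neq T$, $\mathrm{Pr}(P)=TP\cap m_T$, applied elementwise to sets of points not containing $T$. Let $\mathcal S_1=\{(x,x^q,0):x\in\mathbb{F}_{q^3}^*\}\subset m_T$. *)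

theory Defs
  imports Main "HOL-Number_Theory.Prime_Powers"
begin

text \<open>Vectors are triples; a point
(and, dually, a line) is the class of all nonzero scalar multiples of a nonzero
triple.\<close>

type_synonym 'a vec3 = "'a \<times> 'a \<times> 'a"

definition smult3 :: "'a::field \<Rightarrow> 'a vec3 \<Rightarrow> 'a vec3" where
  "smult3 c v = (case v of (x, y, z) \<Rightarrow> (c * x, c * y, c * z))"

definition proj :: "'a::field vec3 \<Rightarrow> 'a vec3 set" where
  "proj v = {smult3 c v | c. c \<noteq> 0}"

definition pg_points :: "'a::field vec3 set set" where
  "pg_points = {proj v | v. v \<noteq> (0, 0, 0)}"

text \<open>Lines are represented by the same kind of classes (dual coordinates).\<close>
abbreviation pg_lines :: "'a::field vec3 set set" where
  "pg_lines \<equiv> pg_points"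

definition dot3 :: "'a::field vec3 \<Rightarrow> 'a vec3 \<Rightarrow> 'a" where
  "dot3 v w = (case v of (x, y, z) \<Rightarrow> case w of (a, b, c) \<Rightarrow> a * x + b * y + c * z)"

definition incident :: "'a::field vec3 set \<Rightarrow> 'a vec3 set \<Rightarrow> bool" where
  "incident P L \<longleftrightarrow> (\<exists>v\<in>P. \<exists>w\<in>L. dot3 v w = 0)"

definition join :: "'a::field vec3 set \<Rightarrow> 'a vec3 set \<Rightarrow> 'a vec3 set" where
  "join P Q = (THE L. L \<in> pg_lines \<and> incident P L \<and> incident Q L)"

definition meet :: "'a::field vec3 set \<Rightarrow> 'a vec3 set \<Rightarrow> 'a vec3 set" where
  "meet L M = (THE P. P \<in> pg_points \<and> incident P L \<and> incident P M)"

definition collinear3 :: "'a::field vec3 set \<Rightarrow> 'a vec3 set \<Rightarrow> 'a vec3 set \<Rightarrow> bool" where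
  "collinear3 P Q R \<longleftrightarrow> (\<exists>L\<in>pg_lines. incident P L \<and> incident Q L \<and> incident R L)"

definition concurrent3 :: "'a::field vec3 set \<Rightarrow> 'a vec3 set \<Rightarrow> 'a vec3 set \<Rightarrow> bool" where
  "concurrent3 L M N \<longleftrightarrow> (\<exists>P\<in>pg_points. incident P L \<and> incident P M \<and> incident P N)"

text \<open>The collineation phi: (x,y,z) \<mapsto> (z^q, x^q, y^q); on lines
[d,e,f] \<mapsto> [f^q, d^q, e^q] (same formula). It acts on classes by image.\<close>

definition phiv :: "nat \<Rightarrow> 'a::field vec3 \<Rightarrow> 'a vec3" where
  "phiv q v = (case v of (x, y, z) \<Rightarrow> (z ^ q, x ^ q, y ^ q))"

definition phi :: "nat \<Rightarrow> 'a::field vec3 set \<Rightarrow> 'a vec3 set" where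
  "phi q P = phiv q ` P"

definition typeII :: "nat \<Rightarrow> 'a::field vec3 set \<Rightarrow> bool" where
  "typeII q P \<longleftrightarrow> P \<in> pg_points \<and> P \<noteq> phi q P \<and> P \<noteq> phi q (phi q P) \<and>
     phi q P \<noteq> phi q (phi q P) \<and> collinear3 P (phi q P) (phi q (phi q P))"

definition typeIII :: "nat \<Rightarrow> 'a::field vec3 set \<Rightarrow> bool" where
  "typeIII q P \<longleftrightarrow> P \<in> pg_points \<and> P \<noteq> phi q P \<and> P \<noteq> phi q (phi q P) \<and>
     phi q P \<noteq> phi q (phi q P) \<and> \<not> collinear3 P (phi q P) (phi q (phi q P))"

definition typeIII_line :: "nat \<Rightarrow> 'a::field vec3 set \<Rightarrow> bool" where
  "typeIII_line q L \<longleftrightarrow> L \<in> pg_lines \<and> L \<noteq> phi q L \<and> L \<noteq> phi q (phi q L) \<and>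
     phi q L \<noteq> phi q (phi q L) \<and> \<not> concurrent3 L (phi q L) (phi q (phi q L))"

definition figE :: "nat \<Rightarrow> 'a::field vec3 set \<Rightarrow> 'a vec3 set set" where
  "figE q X = {P. typeII q P \<and> incident P (join (phi q X) (phi q (phi q X)))}"

definition figF :: "nat \<Rightarrow> 'a::field vec3 set \<Rightarrow> 'a vec3 set set" where
  "figF q X = {meet (phi q l) (phi q (phi q l)) | l. typeIII_line q l \<and> incident X l}"

definition Fig :: "nat \<Rightarrow> 'a::field vec3 set \<Rightarrow> 'a vec3 set set" where
  "Fig q X = figE q X \<union> figF q X"

definition ptT :: "'a::field vec3 set" where
  "ptT = proj (0, 0, 1)"

definition lineMT :: "'a::field vec3 set" where
  "lineMT = proj (0, 0, 1)"

definition Pr :: "'a::field vec3 set \<Rightarrow> 'a vec3 set" where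
  "Pr P = meet (join ptT P) lineMT"

definition S1 :: "nat \<Rightarrow> 'a::field vec3 set set" where
  "S1 q = {proj (x, x ^ q, 0) | x. x \<noteq> 0}"

definition points_on :: "'a::field vec3 set \<Rightarrow> 'a vec3 set set" where
  "points_on L = {P \<in> pg_points. incident P L}"

end

theory Submission
  imports Defs "HOL-Computational_Algebra.Polynomial"
begin

(* In coordinates T = (0,0,1), T^phi = (1,0,0), T^phi^2 = (0,1,0) and m_T = [0,0,1]. Write
   N(x) = x^(1+q+q^2) for the norm of F_{q^3} over F_q. By Hilbert's Theorem 90 (proved by
   counting the fibres of x \<mapsto> x / x^q) a point (a,b,0) of m_T lies in S_1 iff N(a) = N(b).
   A line [v] is of Type III iff det(v, v^phi, v^phi^2) \<noteq> 0, and then l^phi \<inter> l^phi^2 is the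
   cross product of v^phi and v^phi^2. For the lines [0,b,c] through T^phi the determinant is
   N(b) + N(c), and the resulting point projects from T to (-b^q c^(q^2), b^(q+q^2), 0), whose
   coordinates have norms -N(b) N(c) and N(b)^2: they differ iff b \<noteq> 0 (the point is not T)
   and the line is of Type III. Every (a,b,0) with N(a) \<noteq> N(b) and b \<noteq> 0 arises this way,
   and the points of E only project to T^phi^2. For T^phi^2 the lines are [a,0,c] instead. *)

section \<open>Homogeneous coordinates\<close>

definition cross3 :: "'a::field vec3 \<Rightarrow> 'a vec3 \<Rightarrow> 'a vec3" where
  "cross3 u v = (case u of (u1, u2, u3) \<Rightarrow> case v of (v1, v2, v3) \<Rightarrow>
     (u2 * v3 - u3 * v2, u3 * v1 - u1 * v3, u1 * v2 - u2 * v1))"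

lemma smult3_triple [simp]: "smult3 c (x, y, z) = (c * x, c * y, c * z)"
  by (simp add: smult3_def)

lemma dot3_triple [simp]: "dot3 (x, y, z) (a, b, c) = a * x + b * y + c * z"
  by (simp add: dot3_def)

lemma cross3_triple [simp]:
  "cross3 (u1, u2, u3) (v1, v2, v3) = (u2 * v3 - u3 * v2, u3 * v1 - u1 * v3, u1 * v2 - u2 * v1)"
  by (simp add: cross3_def)

lemma phiv_triple [simp]: "phiv q (x, y, z) = (z ^ q, x ^ q, y ^ q)"
  by (simp add: phiv_def)

lemma dot3_commute: "dot3 v w = dot3 w (v::'a::field vec3)"
  by (cases v; cases w) (auto simp: algebra_simps)

lemma dot3_smult3_right: "dot3 v (smult3 c w) = c * dot3 v (w::'a::field vec3)"
  by (cases v; cases w) (auto simp: algebra_simps)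

lemma dot3_cross3_left: "dot3 (cross3 a b) a = (0::'a::field)"
  by (cases a; cases b) (auto simp: algebra_simps)

lemma dot3_cross3_right: "dot3 (cross3 a b) b = (0::'a::field)"
  by (cases a; cases b) (auto simp: algebra_simps)

lemma cross3_eq_0_imp_smult3:
  fixes u w :: "'a::field vec3"
  assumes "cross3 u w = (0, 0, 0)" and "w \<noteq> (0, 0, 0)"
  obtains k where "u = smult3 k w"
proof -
  obtain u1 u2 u3 w1 w2 w3 where uw: "u = (u1, u2, u3)" "w = (w1, w2, w3)"
    by (cases u; cases w)
  have "u2 * w3 = u3 * w2" "u3 * w1 = u1 * w3" "u1 * w2 = u2 * w1"
    using assms(1) by (auto simp: uw)
  then have "u = smult3 (u1 / w1) w \<or> u = smult3 (u2 / w2) w \<or> u = smult3 (u3 / w3) w"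
    using assms(2) by (auto simp: uw field_simps)
  with that show thesis by blast
qed

lemma in_proj_self: "v \<in> proj (v::'a::field vec3)"
  unfolding proj_def by (rule CollectI, rule exI[of _ 1]) (cases v, auto)

lemma proj_eq_iff: "proj v = proj w \<longleftrightarrow> (\<exists>c::'a::field. c \<noteq> 0 \<and> w = smult3 c v)"
proof
  show "\<exists>c. c \<noteq> 0 \<and> w = smult3 c v" if "proj v = proj w"
    using that in_proj_self[of w] by (auto simp: proj_def)
next
  assume "\<exists>c. c \<noteq> 0 \<and> w = smult3 c v"
  then obtain c where c: "c \<noteq> 0" "w = smult3 c v" by blast
  have "smult3 d w = smult3 (d * c) v" "smult3 d v = smult3 (d / c) w" for d
    using c by (cases v; simp)+
  with c(1) show "proj v = proj w"
    unfolding proj_def by (metis (no_types, lifting) divide_eq_0_iff mult_eq_0_iff)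
qed

lemma proj_eq_if_cross3_eq_0:
  fixes u w :: "'a::field vec3"
  assumes "cross3 u w = (0, 0, 0)" and "u \<noteq> (0, 0, 0)" and "w \<noteq> (0, 0, 0)"
  shows "proj u = proj w"
proof -
  obtain k where k: "u = smult3 k w"
    using cross3_eq_0_imp_smult3 assms(1,3) by blast
  with assms(2) have "k \<noteq> 0" by (cases w) auto
  with k show ?thesis by (metis proj_eq_iff)
qed

lemma proj_in_pg_points: "v \<noteq> (0, 0, 0) \<Longrightarrow> proj v \<in> pg_points"
  unfolding pg_points_def by blast

lemma pg_pointsE:
  assumes "P \<in> pg_points"
  obtains x y z where "(x, y, z) \<noteq> (0, 0, 0)" and "P = proj (x, y, z)"
  using assms unfolding pg_points_def by auto

lemma incident_proj_iff: "incident (proj v) (proj w) \<longleftrightarrow> dot3 v (w::'a::field vec3) = 0"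
proof
  assume "incident (proj v) (proj w)"
  then obtain d e where "d \<noteq> 0" "e \<noteq> 0" "dot3 (smult3 d v) (smult3 e w) = 0"
    unfolding incident_def proj_def by blast
  moreover have "dot3 (smult3 d v) (smult3 e w) = d * e * dot3 v w" for d e
    by (cases v; cases w) (auto simp: algebra_simps)
  ultimately show "dot3 v w = 0" by simp
next
  assume "dot3 v w = 0"
  then show "incident (proj v) (proj w)"
    unfolding incident_def using in_proj_self by blast
qed

lemma incident_proj_commute: "incident (proj v) (proj w) \<longleftrightarrow> incident (proj w) (proj (v::'a::field vec3))"
  by (simp add: incident_proj_iff dot3_commute)

lemma proj_eq_cross3_if_orthogonal:
  fixes v a b :: "'a::field vec3"
  assumes "v \<noteq> (0, 0, 0)" and "dot3 v a = 0" and "dot3 v b = 0" and "cross3 a b \<noteq> (0, 0, 0)"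
  shows "proj v = proj (cross3 a b)"
proof (rule proj_eq_if_cross3_eq_0)
  (* v \<times> (a \<times> b) = (v \<cdot> b) a - (v \<cdot> a) b *)
  obtain v1 v2 v3 a1 a2 a3 b1 b2 b3 where vab: "v = (v1, v2, v3)" "a = (a1, a2, a3)" "b = (b1, b2, b3)"
    by (cases v; cases a; cases b)
  have "a1 * v1 + a2 * v2 + a3 * v3 = 0" "b1 * v1 + b2 * v2 + b3 * v3 = 0"
    using assms(2,3) by (simp_all add: vab)
  then show "cross3 v (cross3 a b) = (0, 0, 0)"
    unfolding vab cross3_triple by (simp, algebra)
qed (use assms in auto)

lemma eq_proj_cross3_if_incident:
  fixes a b :: "'a::field vec3"
  assumes "P \<in> pg_points" and "incident P (proj a)" and "incident P (proj b)"
    and "cross3 a b \<noteq> (0, 0, 0)"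
  shows "P = proj (cross3 a b)"
proof -
  obtain x y z where xyz: "(x, y, z) \<noteq> (0, 0, 0)" "P = proj (x, y, z)"
    using assms(1) by (rule pg_pointsE)
  with assms(2,3) have "dot3 (x, y, z) a = 0" "dot3 (x, y, z) b = 0"
    by (simp_all only: incident_proj_iff)
  with xyz assms(4) show ?thesis
    using proj_eq_cross3_if_orthogonal by metis
qed

lemma meet_proj:
  fixes a b :: "'a::field vec3"
  assumes "cross3 a b \<noteq> (0, 0, 0)"
  shows "meet (proj a) (proj b) = proj (cross3 a b)"
  unfolding meet_def
proof (rule the_equality)
  show "proj (cross3 a b) \<in> pg_points \<and> incident (proj (cross3 a b)) (proj a)
      \<and> incident (proj (cross3 a b)) (proj b)"
    using assms by (simp add: proj_in_pg_points incident_proj_iff dot3_cross3_left dot3_cross3_right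
        del: dot3_triple cross3_triple)
qed (use assms eq_proj_cross3_if_incident in blast)

lemma join_proj:
  fixes a b :: "'a::field vec3"
  assumes "cross3 a b \<noteq> (0, 0, 0)"
  shows "join (proj a) (proj b) = proj (cross3 a b)"
  unfolding join_def
proof (rule the_equality)
  show "proj (cross3 a b) \<in> pg_points \<and> incident (proj a) (proj (cross3 a b))
      \<and> incident (proj b) (proj (cross3 a b))"
    using assms by (simp add: proj_in_pg_points incident_proj_iff dot3_cross3_left dot3_cross3_right
        dot3_commute[of _ "cross3 a b"] del: dot3_triple cross3_triple)
next
  fix L assume L: "L \<in> pg_points \<and> incident (proj a) L \<and> incident (proj b) L"
  then obtain x y z where "L = proj (x, y, z)" by (blast elim: pg_pointsE)
  with L show "L = proj (cross3 a b)"
    using assms eq_proj_cross3_if_incident incident_proj_commute by metis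
qed

lemma concurrent3_proj_iff:
  fixes l m n :: "'a::field vec3"
  assumes "cross3 m n \<noteq> (0, 0, 0)"
  shows "concurrent3 (proj l) (proj m) (proj n) \<longleftrightarrow> dot3 (cross3 m n) l = 0"
proof -
  have "concurrent3 (proj l) (proj m) (proj n) \<longleftrightarrow> incident (proj (cross3 m n)) (proj l)"
    unfolding concurrent3_def using assms eq_proj_cross3_if_incident
    by (metis dot3_cross3_left dot3_cross3_right incident_proj_iff proj_in_pg_points)
  then show ?thesis by (simp only: incident_proj_iff)
qed

lemma proj_triangle_iff:
  fixes l m n :: "'a::field vec3"
  assumes "m \<noteq> (0, 0, 0)" and "n \<noteq> (0, 0, 0)"
  shows "proj l \<noteq> proj m \<and> proj l \<noteq> proj n \<and> proj m \<noteq> proj n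
      \<and> \<not> concurrent3 (proj l) (proj m) (proj n)
    \<longleftrightarrow> dot3 (cross3 m n) l \<noteq> 0"
proof
  assume det: "dot3 (cross3 m n) l \<noteq> 0"
  then have cross: "cross3 m n \<noteq> (0, 0, 0)" by (cases l) auto
  have "proj m \<noteq> proj n"
    using cross by (cases m) (auto simp: proj_eq_iff algebra_simps)
  moreover have "proj m \<noteq> proj l" "proj n \<noteq> proj l"
    using det by (auto simp: proj_eq_iff dot3_smult3_right dot3_cross3_left dot3_cross3_right
        simp del: dot3_triple cross3_triple)
  ultimately show "proj l \<noteq> proj m \<and> proj l \<noteq> proj n \<and> proj m \<noteq> proj n
      \<and> \<not> concurrent3 (proj l) (proj m) (proj n)"
    using det cross concurrent3_proj_iff by blast
next
  assume triangle: "proj l \<noteq> proj m \<and> proj l \<noteq> proj n \<and> proj m \<noteq> proj n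
      \<and> \<not> concurrent3 (proj l) (proj m) (proj n)"
  then have "cross3 m n \<noteq> (0, 0, 0)"
    using assms proj_eq_if_cross3_eq_0 by blast
  with triangle show "dot3 (cross3 m n) l \<noteq> 0"
    using concurrent3_proj_iff by blast
qed

lemma Pr_proj:
  assumes "(a::'a::field, b) \<noteq> (0, 0)"
  shows "Pr (proj (a, b, c)) = proj (a, b, 0)"
proof -
  have "join ptT (proj (a, b, c)) = proj (-b, a, 0)"
    unfolding ptT_def using assms by (subst join_proj) auto
  moreover have "meet (proj (-b, a, 0)) lineMT = proj (a, b, 0)"
    unfolding lineMT_def using assms by (subst meet_proj) auto
  ultimately show ?thesis
    unfolding Pr_def by simp
qed

lemma pg_points_ne_ptTE:
  assumes "P \<in> pg_points" and "P \<noteq> ptT"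
  obtains a b c :: "'a::field" where "(a, b) \<noteq> (0, 0)" and "P = proj (a, b, c)"
proof -
  obtain a b c :: 'a where abc: "(a, b, c) \<noteq> (0, 0, 0)" "P = proj (a, b, c)"
    using assms(1) by (rule pg_pointsE)
  have "(a, b) \<noteq> (0, 0)"
  proof
    assume "(a, b) = (0, 0)"
    then have "P = ptT"
      using abc unfolding ptT_def by (auto simp: proj_eq_iff intro!: exI[of _ "inverse c"])
    with assms(2) show False ..
  qed
  with abc that show thesis by blast
qed

lemma proj_eq_proj_1_0_0_iff: "proj (a, b, 0) = proj (1, 0, 0) \<longleftrightarrow> a \<noteq> (0::'a::field) \<and> b = 0"
  by (auto simp: proj_eq_iff intro!: exI[of _ "inverse a"])

lemma proj_eq_proj_0_1_0_iff: "proj (a, b, 0) = proj (0, 1, 0) \<longleftrightarrow> a = (0::'a::field) \<and> b \<noteq> 0"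
  by (auto simp: proj_eq_iff intro!: exI[of _ "inverse b"])

lemma points_on_lineMT: "points_on lineMT = {proj (a, b, 0) | a b :: 'a::field. (a, b) \<noteq> (0, 0)}"
  unfolding points_on_def lineMT_def
  by (auto simp: incident_proj_iff intro: proj_in_pg_points elim!: pg_pointsE)

lemma Pr_eq_if_incident_line_through_ptT:
  fixes a b :: "'a::field"
  assumes "(a, b) \<noteq> (0, 0)" and "P \<in> pg_points" and "P \<noteq> ptT"
    and "incident P (proj (a, b, 0))"
  shows "Pr P = proj (-b, a, 0)"
proof -
  obtain x y z where xy: "(x, y) \<noteq> (0, 0)" and P: "P = proj (x, y, z)"
    using assms(2,3) by (rule pg_points_ne_ptTE)
  have "a * x + b * y = 0"
    using assms(4) by (simp add: P incident_proj_iff)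
  then have "proj (x, y, 0) = proj (-b, a, 0)"
    using xy assms(1) by (intro proj_eq_if_cross3_eq_0) (auto simp: algebra_simps)
  with xy show ?thesis
    by (simp add: P Pr_proj)
qed

section \<open>The norm of a field of order q^3 and the set S_1\<close>

lemma power_card_UNIV_eq_self:
  fixes x :: "'a::{finite, field}"
  shows "x ^ card (UNIV :: 'a set) = x"
proof (cases "x = 0")
  case False
  let ?units = "UNIV - {0 :: 'a}"
  have "x ^ card ?units * (\<Prod>y\<in>?units. y) = (\<Prod>y\<in>?units. x * y)"
    by (simp add: prod.distrib)
  also have "\<dots> = (\<Prod>y\<in>?units. y)"
    by (rule prod.reindex_bij_witness[of _ "\<lambda>y. y / x" "\<lambda>y. x * y"]) (use False in auto)
  finally have "x ^ card ?units = 1"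
    by simp
  moreover have "card (UNIV :: 'a set) = Suc (card ?units)"
    using card_Suc_Diff1[of "UNIV :: 'a set" 0] by simp
  ultimately show ?thesis
    by (metis power_Suc mult.right_neutral)
qed (simp add: finite_UNIV_card_ge_0)

lemma card_roots_of_unity_le:
  assumes "1 \<le> n"
  shows "card {x :: 'a::idom. x ^ n = 1} \<le> n"
proof -
  define p :: "'a poly" where "p = monom 1 n + [:-1:]"
  have "degree p = n"
    unfolding p_def using assms by (subst degree_add_eq_left) (auto simp: degree_monom_eq)
  moreover from this have "p \<noteq> 0"
    using assms by auto
  moreover have "{x. x ^ n = 1} = {x. poly p x = 0}"
    by (simp add: p_def poly_monom)
  ultimately show ?thesis
    using card_poly_roots_bound by metis
qed

lemma card_le_card_image_mult:
  assumes "finite S" and "\<And>y. card {x \<in> S. f x = y} \<le> k"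
  shows "card S \<le> card (f ` S) * k"
proof -
  have "card S = card (\<Union>y\<in>f ` S. {x \<in> S. f x = y})"
    by (rule arg_cong[of _ _ card]) auto
  also have "\<dots> \<le> (\<Sum>y\<in>f ` S. card {x \<in> S. f x = y})"
    by (rule card_UN_le) (use assms(1) in simp)
  also have "\<dots> \<le> card (f ` S) * k"
    using sum_bounded_above[of "f ` S" "\<lambda>y. card {x \<in> S. f x = y}" k] assms(2) by simp
  finally show ?thesis .
qed

definition field_norm :: "nat \<Rightarrow> 'a::field \<Rightarrow> 'a" where
  "field_norm q x = x * x ^ q * (x ^ q) ^ q"

lemma field_norm_mult: "field_norm q (x * y) = field_norm q x * field_norm q y"
  by (simp add: field_norm_def power_mult_distrib algebra_simps)

lemma field_norm_eq_power: "field_norm q x = x ^ (1 + q + q * q)"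
  by (simp add: field_norm_def power_add power_mult)

lemma field_norm_eq_0_iff [simp]: "field_norm q x = 0 \<longleftrightarrow> x = 0"
  by (auto simp: field_norm_def)

lemma field_norm_0 [simp]: "field_norm q 0 = 0"
  by (simp add: field_norm_def)

lemma field_norm_1 [simp]: "field_norm q 1 = 1"
  by (simp add: field_norm_def)

lemma field_norm_divide: "field_norm q (x / y) = field_norm q x / field_norm q y"
  by (simp add: field_norm_def power_divide)

lemma field_norm_minus: "field_norm q (- x) = - field_norm q x"
proof -
  have "field_norm q (-1 :: 'a) = -1"
    by (cases "even q") (simp_all add: field_norm_def)
  then show ?thesis
    using field_norm_mult[of q "-1" x] by simp
qed

locale field_card_cube =
  fixes q :: nat and field_type :: "'a::{finite, field} itself"
  assumes card_UNIV: "card (UNIV :: 'a set) = q ^ 3"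
    and two_le_q: "2 \<le> q"
begin

lemma power_q_cube [simp]: "((x ^ q) ^ q) ^ q = (x::'a)"
  using power_card_UNIV_eq_self[of x] by (simp add: card_UNIV power_mult[symmetric] power3_eq_cube)

lemma zero_power_q [simp]: "(0::'a) ^ q = 0"
  using two_le_q by simp

lemma field_norm_power_q [simp]: "field_norm q ((x::'a) ^ q) = field_norm q x"
  by (simp add: field_norm_def algebra_simps)

lemma card_fibre_div_power_q_le: "card {x::'a. x \<noteq> 0 \<and> x / x ^ q = y} \<le> q - 1"
proof (cases "\<exists>x0. x0 \<noteq> 0 \<and> x0 / x0 ^ q = y")
  case True
  then obtain x0 where x0: "x0 \<noteq> 0" "x0 / x0 ^ q = y" by blast
  have "{x. x \<noteq> 0 \<and> x / x ^ q = y} \<subseteq> (\<lambda>z. z * x0) ` {z. z ^ (q - 1) = 1}"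
  proof
    fix x assume x: "x \<in> {x. x \<noteq> 0 \<and> x / x ^ q = y}"
    define z where "z = x / x0"
    have "z ^ q = z" "z \<noteq> 0"
      using x x0 by (auto simp: z_def field_simps)
    moreover have "z ^ (q - 1) * z = z ^ q"
      using two_le_q by (intro power_minus_mult) simp
    ultimately have "z ^ (q - 1) = 1"
      by simp
    moreover have "x = z * x0"
      using x0 by (simp add: z_def)
    ultimately show "x \<in> (\<lambda>z. z * x0) ` {z. z ^ (q - 1) = 1}" by blast
  qed
  then have "card {x. x \<noteq> 0 \<and> x / x ^ q = y} \<le> card ((\<lambda>z. z * x0) ` {z::'a. z ^ (q - 1) = 1})"
    by (intro card_mono) auto
  also have "\<dots> \<le> card {z::'a. z ^ (q - 1) = 1}"
    by (rule card_image_le) simp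
  also have "\<dots> \<le> q - 1"
    using two_le_q by (intro card_roots_of_unity_le) simp
  finally show ?thesis .
next
  case False
  then have "{x::'a. x \<noteq> 0 \<and> x / x ^ q = y} = {}" by blast
  then show ?thesis by (metis card.empty zero_le)
qed

lemma hilbert90:
  assumes "field_norm q u = 1"
  obtains x :: 'a where "x \<noteq> 0" and "u = x / x ^ q"
proof -
  let ?units = "{x::'a. x \<noteq> 0}" and ?f = "\<lambda>x::'a. x / x ^ q"
  let ?norm1 = "{u::'a. u ^ (1 + q + q * q) = 1}"
  have image_subset: "?f ` ?units \<subseteq> ?norm1"
  proof
    fix y assume "y \<in> ?f ` ?units"
    then obtain x where "x \<noteq> 0" "y = x / x ^ q" by auto
    then have "field_norm q y = 1" by (simp add: field_norm_divide)
    then show "y \<in> ?norm1" by (simp add: field_norm_eq_power)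
  qed
  (* the fibres of x / x^q have at most q - 1 elements, so its image has at least
     (q^3 - 1) / (q - 1) = 1 + q + q^2 elements, which bounds the roots of u^(1+q+q^2) = 1 *)
  obtain r where r: "q = r + 2"
    using two_le_q by (metis add.commute le_add_diff_inverse)
  have "?units = UNIV - {0}" by auto
  then have "(q - 1) * (1 + q + q * q) = card ?units"
    by (simp add: card_UNIV card_Diff_singleton r algebra_simps power3_eq_cube)
  also have "\<dots> \<le> card (?f ` ?units) * (q - 1)"
  proof (rule card_le_card_image_mult)
    show "card {x \<in> ?units. ?f x = y} \<le> q - 1" for y
      using card_fibre_div_power_q_le[of y] by simp
  qed simp
  finally have "(1 + q + q * q) * (q - 1) \<le> card (?f ` ?units) * (q - 1)"
    by (simp only: mult.commute)
  then have "1 + q + q * q \<le> card (?f ` ?units)"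
    using two_le_q by (subst (asm) mult_le_cancel2) simp
  moreover have "card ?norm1 \<le> 1 + q + q * q"
    by (rule card_roots_of_unity_le) simp
  ultimately have "card ?norm1 \<le> card (?f ` ?units)"
    by linarith
  then have "?f ` ?units = ?norm1"
    using image_subset card_mono[OF finite image_subset] by (intro card_subset_eq) auto
  moreover have "u \<in> ?norm1"
    using assms by (simp add: field_norm_eq_power)
  ultimately show thesis
    using that by auto
qed

lemma points_on_lineMT_diff_S1:
  "points_on lineMT - S1 q = {proj (a, b, 0) | a b :: 'a. field_norm q a \<noteq> field_norm q b}"
proof (intro set_eqI iffI)
  fix P :: "'a vec3 set"
  assume P: "P \<in> points_on lineMT - S1 q"
  then obtain a b :: 'a where ab: "(a, b) \<noteq> (0, 0)" "P = proj (a, b, 0)"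
    by (auto simp: points_on_lineMT)
  have "field_norm q a \<noteq> field_norm q b"
  proof
    assume norms: "field_norm q a = field_norm q b"
    with ab(1) have "a \<noteq> 0" "b \<noteq> 0" by auto
    with norms have "field_norm q (a / b) = 1" by (simp add: field_norm_divide)
    then obtain x where x: "x \<noteq> 0" "a / b = x / x ^ q" by (rule hilbert90)
    with \<open>b \<noteq> 0\<close> have "proj (x, x ^ q, 0) = P"
      unfolding ab(2) proj_eq_iff by (intro exI[of _ "b / x ^ q"]) (auto simp: field_simps)
    with x(1) have "P \<in> S1 q" unfolding S1_def by blast
    with P show False by blast
  qed
  with ab(2) show "P \<in> {proj (a, b, 0) | a b. field_norm q a \<noteq> field_norm q b}" by blast
next
  fix P :: "'a vec3 set"
  assume "P \<in> {proj (a, b, 0) | a b. field_norm q a \<noteq> field_norm q b}"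
  then obtain a b :: 'a where ab: "field_norm q a \<noteq> field_norm q b" "P = proj (a, b, 0)"
    by blast
  have "P \<notin> S1 q"
  proof
    assume "P \<in> S1 q"
    then obtain x c :: 'a where c: "c \<noteq> 0" and "(x, x ^ q, 0) = smult3 c (a, b, 0)"
      unfolding S1_def ab(2) by (auto simp: proj_eq_iff)
    then have "field_norm q (c * b) = field_norm q (c * a)"
      by (metis field_norm_power_q prod.inject smult3_triple)
    with c have "field_norm q a = field_norm q b"
      by (simp add: field_norm_mult)
    with ab(1) show False ..
  qed
  moreover have "(a, b) \<noteq> (0, 0)" using ab(1) by auto
  ultimately show "P \<in> points_on lineMT - S1 q"
    using ab(2) by (auto simp: points_on_lineMT)
qed

section \<open>The collineation phi and the Fig-blocks of T^phi and T^phi^2\<close>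

lemma phi_proj: "phi q (proj v) = proj (phiv q (v::'a vec3))"
proof -
  obtain x y z where v: "v = (x, y, z)" by (cases v)
  show ?thesis
  proof (rule set_eqI, rule iffI)
    fix p
    assume "p \<in> phi q (proj v)"
    then obtain c where "c \<noteq> 0" and "p = phiv q (smult3 c v)"
      by (auto simp: phi_def proj_def)
    moreover have "phiv q (smult3 c v) = smult3 (c ^ q) (phiv q v)"
      by (simp add: v power_mult_distrib)
    ultimately show "p \<in> proj (phiv q v)"
      by (auto simp: proj_def)
  next
    fix p
    assume "p \<in> proj (phiv q v)"
    then obtain d where "d \<noteq> 0" and "p = smult3 d (phiv q v)"
      by (auto simp: proj_def)
    moreover have "smult3 d (phiv q v) = phiv q (smult3 ((d ^ q) ^ q) v)"
      by (simp add: v power_mult_distrib)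
    ultimately show "p \<in> phi q (proj v)"
      unfolding phi_def proj_def by (auto intro!: imageI)
  qed
qed

lemma phiv_eq_0_iff [simp]: "phiv q v = (0, 0, 0) \<longleftrightarrow> v = (0, 0, 0 :: 'a)"
  using two_le_q by (cases v) auto

lemma typeIII_line_proj_iff:
  assumes "v \<noteq> (0, 0, 0 :: 'a)"
  shows "typeIII_line q (proj v) \<longleftrightarrow> dot3 (cross3 (phiv q v) (phiv q (phiv q v))) v \<noteq> 0"
  using assms proj_triangle_iff[of "phiv q v" "phiv q (phiv q v)" v]
  by (simp add: typeIII_line_def phi_proj proj_in_pg_points)

lemma meet_phi_proj:
  assumes "dot3 (cross3 (phiv q v) (phiv q (phiv q v))) v \<noteq> (0::'a)"
  shows "meet (phi q (proj v)) (phi q (phi q (proj v))) = proj (cross3 (phiv q v) (phiv q (phiv q v)))"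
proof -
  have "cross3 (phiv q v) (phiv q (phiv q v)) \<noteq> (0, 0, 0)"
    using assms by (cases v) auto
  then show ?thesis
    by (simp add: phi_proj meet_proj del: cross3_triple phiv_triple)
qed

lemma figF_proj:
  "figF q (proj x) = {proj (cross3 (phiv q v) (phiv q (phiv q v))) | v :: 'a vec3.
     dot3 x v = 0 \<and> dot3 (cross3 (phiv q v) (phiv q (phiv q v))) v \<noteq> 0}"
    (is "_ = {proj (?meet v) | v. dot3 x v = 0 \<and> ?det v \<noteq> 0}")
proof (intro set_eqI iffI)
  fix P assume "P \<in> figF q (proj x)"
  then obtain l where P: "P = meet (phi q l) (phi q (phi q l))"
    and l: "typeIII_line q l" "incident (proj x) l"
    unfolding figF_def by blast
  from l(1) have "l \<in> pg_points"
    unfolding typeIII_line_def by blast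
  then obtain v where v: "v \<noteq> (0, 0, 0)" "l = proj v"
    by (metis pg_pointsE)
  with l have "dot3 x v = 0" "?det v \<noteq> 0"
    by (simp_all add: incident_proj_iff typeIII_line_proj_iff del: cross3_triple phiv_triple)
  moreover from this have "P = proj (?meet v)"
    unfolding P v(2) by (intro meet_phi_proj)
  ultimately show "P \<in> {proj (?meet v) | v. dot3 x v = 0 \<and> ?det v \<noteq> 0}" by blast
next
  fix P assume "P \<in> {proj (?meet v) | v. dot3 x v = 0 \<and> ?det v \<noteq> 0}"
  then obtain v where v: "dot3 x v = 0" "?det v \<noteq> 0" and P: "P = proj (?meet v)"
    by blast
  from v(2) have "v \<noteq> (0, 0, 0)" by auto
  with v have "typeIII_line q (proj v)" "incident (proj x) (proj v)"
    by (simp_all add: incident_proj_iff typeIII_line_proj_iff del: cross3_triple phiv_triple)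
  moreover have "P = meet (phi q (proj v)) (phi q (phi q (proj v)))"
    unfolding P using v(2) by (rule meet_phi_proj[symmetric])
  ultimately show "P \<in> figF q (proj x)"
    unfolding figF_def by blast
qed

lemma phi_ptT: "phi q ptT = proj (1, 0, 0 :: 'a)"
  by (simp add: ptT_def phi_proj)

lemma phi_phi_ptT: "phi q (phi q ptT) = proj (0, 1, 0 :: 'a)"
  by (simp add: phi_ptT phi_proj)

lemma figF_phi_ptT:
  "figF q (phi q ptT) = {proj (- (b ^ q * (c ^ q) ^ q), b ^ q * (b ^ q) ^ q, c ^ q * (c ^ q) ^ q)
     | b c :: 'a. field_norm q b + field_norm q c \<noteq> 0}"
proof -
  have "dot3 (1, 0, 0) v = 0 \<longleftrightarrow> (\<exists>b c. v = (0, b, c))" for v :: "'a vec3"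
    by (cases v) auto
  then show ?thesis
    unfolding phi_ptT figF_proj by (auto simp: field_norm_def algebra_simps)
qed

lemma Pr_figF_phi_ptT:
  "Pr ` (figF q (phi q ptT) - {ptT})
     = {proj (a, b, 0) | a b :: 'a. field_norm q a \<noteq> field_norm q b \<and> b \<noteq> 0}"
proof (intro set_eqI iffI)
  fix Q :: "'a vec3 set"
  assume "Q \<in> Pr ` (figF q (phi q ptT) - {ptT})"
  then obtain b c :: 'a where norms: "field_norm q b + field_norm q c \<noteq> 0"
    and P_ne: "proj (- (b ^ q * (c ^ q) ^ q), b ^ q * (b ^ q) ^ q, c ^ q * (c ^ q) ^ q) \<noteq> ptT"
    and Q: "Q = Pr (proj (- (b ^ q * (c ^ q) ^ q), b ^ q * (b ^ q) ^ q, c ^ q * (c ^ q) ^ q))"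
    unfolding figF_phi_ptT by blast
  have "b \<noteq> 0"
  proof
    assume "b = 0"
    with norms have "c \<noteq> 0" by simp
    then have "proj (0, 0, c ^ q * (c ^ q) ^ q) = ptT"
      unfolding ptT_def by (intro proj_eq_if_cross3_eq_0) auto
    with \<open>b = 0\<close> P_ne show False
      by simp
  qed
  then have "Q = proj (- (b ^ q * (c ^ q) ^ q), b ^ q * (b ^ q) ^ q, 0)"
    by (simp add: Q Pr_proj)
  moreover have "field_norm q (- (b ^ q * (c ^ q) ^ q)) \<noteq> field_norm q (b ^ q * (b ^ q) ^ q)"
  proof -
    have "field_norm q b * field_norm q b + field_norm q b * field_norm q c \<noteq> 0"
      using norms \<open>b \<noteq> 0\<close> by (simp flip: distrib_left)
    then show ?thesis
      by (simp add: field_norm_minus field_norm_mult neg_eq_iff_add_eq_0 add.commute)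
  qed
  moreover have "b ^ q * (b ^ q) ^ q \<noteq> 0"
    using \<open>b \<noteq> 0\<close> by simp
  ultimately show "Q \<in> {proj (a, b, 0) | a b. field_norm q a \<noteq> field_norm q b \<and> b \<noteq> 0}"
    by blast
next
  fix Q :: "'a vec3 set"
  assume "Q \<in> {proj (a, b, 0) | a b. field_norm q a \<noteq> field_norm q b \<and> b \<noteq> 0}"
  then obtain a b :: 'a where ab: "field_norm q a \<noteq> field_norm q b" "b \<noteq> 0"
    and Q: "Q = proj (a, b, 0)"
    by blast
  (* since x^(q^3) = x, these undo the Frobenius twists in the coordinates of the point *)
  define b' c' where "b' = b ^ q" and "c' = (- a) ^ q"
  define P where "P = proj (- (b' ^ q * (c' ^ q) ^ q), b' ^ q * (b' ^ q) ^ q, c' ^ q * (c' ^ q) ^ q)"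
  have "field_norm q b' + field_norm q c' \<noteq> 0"
    using ab(1) by (simp add: b'_def c'_def field_norm_minus)
  then have "P \<in> figF q (phi q ptT)"
    unfolding figF_phi_ptT P_def by blast
  moreover have P: "P = proj ((b ^ q) ^ q * a, (b ^ q) ^ q * b, c' ^ q * (c' ^ q) ^ q)"
    by (simp add: P_def b'_def c'_def)
  then have "P \<noteq> ptT"
    using ab(2) by (simp add: ptT_def proj_eq_iff)
  moreover have "Pr P = Q"
    unfolding P Q using ab(2) by (simp add: Pr_proj proj_eq_iff exI[of _ "inverse ((b ^ q) ^ q)"])
  ultimately show "Q \<in> Pr ` (figF q (phi q ptT) - {ptT})"
    by blast
qed

lemma Pr_figE_phi_ptT: "Pr ` (figE q (phi q ptT) - {ptT}) \<subseteq> {phi q (phi q ptT) :: 'a vec3 set}"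
proof (rule image_subsetI)
  fix P :: "'a vec3 set"
  assume "P \<in> figE q (phi q ptT) - {ptT}"
  then have P: "P \<in> pg_points" "P \<noteq> ptT"
    and "incident P (join (phi q (phi q ptT)) (phi q (phi q (phi q ptT))))"
    unfolding figE_def typeII_def by auto
  moreover have "join (phi q (phi q ptT)) (phi q (phi q (phi q ptT))) = proj (1, 0, 0 :: 'a)"
    by (simp add: phi_phi_ptT phi_proj join_proj)
  ultimately have "Pr P = proj (- 0, 1, 0)"
    by (intro Pr_eq_if_incident_line_through_ptT) auto
  then show "Pr P \<in> {phi q (phi q ptT)}"
    by (simp add: phi_phi_ptT)
qed

lemma Pr_Fig_phi_ptT:
  "Pr ` (Fig q (phi q ptT) - {ptT}) = points_on lineMT - (S1 q \<union> {phi q ptT :: 'a vec3 set})"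
proof -
  let ?F = "{proj (a, b, 0) | a b :: 'a. field_norm q a \<noteq> field_norm q b \<and> b \<noteq> 0}"
  have "Pr ` (Fig q (phi q ptT) - {ptT})
      = Pr ` (figE q (phi q ptT) - {ptT}) \<union> Pr ` (figF q (phi q ptT) - {ptT})"
    unfolding Fig_def by blast
  also have "\<dots> = ?F"
  proof -
    have "proj (0, 1, 0) \<in> ?F" by force
    then have "Pr ` (figE q (phi q ptT) - {ptT}) \<subseteq> ?F"
      using Pr_figE_phi_ptT unfolding phi_phi_ptT by blast
    then show ?thesis
      unfolding Pr_figF_phi_ptT by blast
  qed
  also have "?F = points_on lineMT - S1 q - {phi q ptT}"
  proof -
    have "proj (a, b, 0) \<noteq> proj (1, 0, 0) \<longleftrightarrow> b \<noteq> 0"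
      if "field_norm q a \<noteq> field_norm q b" for a b :: 'a
      using that by (auto simp: proj_eq_proj_1_0_0_iff)
    then show ?thesis
      unfolding points_on_lineMT_diff_S1 phi_ptT by blast
  qed
  finally show ?thesis
    by blast
qed

lemma figF_phi_phi_ptT:
  "figF q (phi q (phi q ptT)) = {proj (a ^ q * (a ^ q) ^ q, - (c ^ q * (a ^ q) ^ q), c ^ q * (c ^ q) ^ q)
     | a c :: 'a. field_norm q a + field_norm q c \<noteq> 0}"
proof -
  have "dot3 (0, 1, 0) v = 0 \<longleftrightarrow> (\<exists>a c. v = (a, 0, c))" for v :: "'a vec3"
    by (cases v) auto
  then show ?thesis
    unfolding phi_phi_ptT figF_proj by (auto simp: field_norm_def algebra_simps)
qed

lemma Pr_figF_phi_phi_ptT: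
  "Pr ` (figF q (phi q (phi q ptT)) - {ptT})
     = {proj (a, b, 0) | a b :: 'a. field_norm q a \<noteq> field_norm q b \<and> a \<noteq> 0}"
proof (intro set_eqI iffI)
  fix Q :: "'a vec3 set"
  assume "Q \<in> Pr ` (figF q (phi q (phi q ptT)) - {ptT})"
  then obtain a c :: 'a where norms: "field_norm q a + field_norm q c \<noteq> 0"
    and P_ne: "proj (a ^ q * (a ^ q) ^ q, - (c ^ q * (a ^ q) ^ q), c ^ q * (c ^ q) ^ q) \<noteq> ptT"
    and Q: "Q = Pr (proj (a ^ q * (a ^ q) ^ q, - (c ^ q * (a ^ q) ^ q), c ^ q * (c ^ q) ^ q))"
    unfolding figF_phi_phi_ptT by blast
  have "a \<noteq> 0"
  proof
    assume "a = 0"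
    with norms have "c \<noteq> 0" by simp
    then have "proj (0, 0, c ^ q * (c ^ q) ^ q) = ptT"
      unfolding ptT_def by (intro proj_eq_if_cross3_eq_0) auto
    with \<open>a = 0\<close> P_ne show False
      by simp
  qed
  then have "Q = proj (a ^ q * (a ^ q) ^ q, - (c ^ q * (a ^ q) ^ q), 0)"
    by (simp add: Q Pr_proj)
  moreover have "field_norm q (a ^ q * (a ^ q) ^ q) \<noteq> field_norm q (- (c ^ q * (a ^ q) ^ q))"
  proof -
    have "field_norm q a * field_norm q a + field_norm q c * field_norm q a \<noteq> 0"
      using norms \<open>a \<noteq> 0\<close> by (simp flip: distrib_right)
    then show ?thesis
      by (simp add: field_norm_minus field_norm_mult eq_neg_iff_add_eq_0)
  qed
  moreover have "a ^ q * (a ^ q) ^ q \<noteq> 0"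
    using \<open>a \<noteq> 0\<close> by simp
  ultimately show "Q \<in> {proj (a, b, 0) | a b. field_norm q a \<noteq> field_norm q b \<and> a \<noteq> 0}"
    by blast
next
  fix Q :: "'a vec3 set"
  assume "Q \<in> {proj (a, b, 0) | a b. field_norm q a \<noteq> field_norm q b \<and> a \<noteq> 0}"
  then obtain a b :: 'a where ab: "field_norm q a \<noteq> field_norm q b" "a \<noteq> 0"
    and Q: "Q = proj (a, b, 0)"
    by blast
  define a' c' where "a' = (a ^ q) ^ q" and "c' = ((- b) ^ q) ^ q"
  define P where "P = proj (a' ^ q * (a' ^ q) ^ q, - (c' ^ q * (a' ^ q) ^ q), c' ^ q * (c' ^ q) ^ q)"
  have "field_norm q a' + field_norm q c' \<noteq> 0"
    using ab(1) by (simp add: a'_def c'_def field_norm_minus)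
  then have "P \<in> figF q (phi q (phi q ptT))"
    unfolding figF_phi_phi_ptT P_def by blast
  moreover have P: "P = proj (a ^ q * a, a ^ q * b, c' ^ q * (c' ^ q) ^ q)"
    by (simp add: P_def a'_def c'_def mult.commute)
  then have "P \<noteq> ptT"
    using ab(2) by (simp add: ptT_def proj_eq_iff)
  moreover have "Pr P = Q"
    unfolding P Q using ab(2) by (simp add: Pr_proj proj_eq_iff exI[of _ "inverse (a ^ q)"])
  ultimately show "Q \<in> Pr ` (figF q (phi q (phi q ptT)) - {ptT})"
    by blast
qed

lemma phi_phi_phi_ptT: "phi q (phi q (phi q ptT)) = (ptT :: 'a vec3 set)"
  by (simp add: phi_phi_ptT phi_proj ptT_def)

lemma Pr_figE_phi_phi_ptT:
  "Pr ` (figE q (phi q (phi q ptT)) - {ptT}) \<subseteq> {phi q ptT :: 'a vec3 set}"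
proof (rule image_subsetI)
  fix P :: "'a vec3 set"
  assume "P \<in> figE q (phi q (phi q ptT)) - {ptT}"
  then have P: "P \<in> pg_points" "P \<noteq> ptT"
    and "incident P (join (phi q (phi q (phi q ptT))) (phi q (phi q (phi q (phi q ptT)))))"
    unfolding figE_def typeII_def by auto
  moreover have "join (phi q (phi q (phi q ptT))) (phi q (phi q (phi q (phi q ptT))))
      = proj (0, 1, 0 :: 'a)"
    unfolding phi_phi_phi_ptT unfolding phi_ptT by (simp add: ptT_def join_proj)
  ultimately have "Pr P = proj (- 1, 0, 0)"
    by (intro Pr_eq_if_incident_line_through_ptT) auto
  then show "Pr P \<in> {phi q ptT}"
    by (simp add: phi_ptT proj_eq_proj_1_0_0_iff)
qed

lemma Pr_Fig_phi_phi_ptT: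
  "Pr ` (Fig q (phi q (phi q ptT)) - {ptT})
     = points_on lineMT - (S1 q \<union> {phi q (phi q ptT) :: 'a vec3 set})"
proof -
  let ?F = "{proj (a, b, 0) | a b :: 'a. field_norm q a \<noteq> field_norm q b \<and> a \<noteq> 0}"
  have "Pr ` (Fig q (phi q (phi q ptT)) - {ptT})
      = Pr ` (figE q (phi q (phi q ptT)) - {ptT}) \<union> Pr ` (figF q (phi q (phi q ptT)) - {ptT})"
    unfolding Fig_def by blast
  also have "\<dots> = ?F"
  proof -
    have "proj (1, 0, 0) \<in> ?F"
      by (rule CollectI, rule exI[of _ 1], rule exI[of _ 0]) simp
    then have "Pr ` (figE q (phi q (phi q ptT)) - {ptT}) \<subseteq> ?F"
      using Pr_figE_phi_phi_ptT unfolding phi_ptT by blast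
    then show ?thesis
      unfolding Pr_figF_phi_phi_ptT by blast
  qed
  also have "?F = points_on lineMT - S1 q - {phi q (phi q ptT)}"
  proof -
    have "proj (a, b, 0) \<noteq> proj (0, 1, 0) \<longleftrightarrow> a \<noteq> 0"
      if "field_norm q a \<noteq> field_norm q b" for a b :: 'a
      using that by (auto simp: proj_eq_proj_0_1_0_iff)
    then show ?thesis
      unfolding points_on_lineMT_diff_S1 phi_phi_ptT by blast
  qed
  finally show ?thesis
    by blast
qed

end

theorem theorem6p3:
  fixes q :: nat and T :: "'a::{finite, field} vec3 set"
  defines "T \<equiv> ptT"
  assumes "primepow q"
    and "card (UNIV :: 'a set) = q ^ 3"
  shows "Pr ` (Fig q (phi q T) - {T})
           = points_on lineMT - (S1 q \<union> {phi q T})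
     \<and> Pr ` (Fig q (phi q (phi q T)) - {T})
           = points_on lineMT - (S1 q \<union> {phi q (phi q T)})"
proof -
  have "2 \<le> q"
    using assms(2) primepow_gt_Suc_0 by fastforce
  with assms(3) interpret field_card_cube q "TYPE('a)"
    by unfold_locales
  show ?thesis
    unfolding T_def using Pr_Fig_phi_ptT Pr_Fig_phi_phi_ptT by (rule conjI)
qed

end
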